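(* Let $X,Y:[0,1]\to\mathbb{R}^2$ be independent planar Brownian motions started at $x,y$ under $\mathbb{P}_{x,y}$. For an integer $T\geq1$, $\epsilon>0$ and $j\in\{1,\dots,T\}$, let $T_j=\{i\in\{1,\dots,T\}:|X_{(i-1)T^{-1}}-Y_{(j-1)T^{-1}}|\leq T^{-\frac12+\epsilon}\}$. Then for all $r>0$ and $\epsilon>0$ there exists $C$ such that for all $T$ and all $j\in\{1,\dots,T\}$, $$\sup_{x,y}\mathbb{P}_{x,y}(\#T_j\geq T^{3\epsilon})\leq CT^{-r},$$ and moreover $$\sup_{x,y}\mathbb{P}_{x,y}\Big(\#\{(i,j)\in\{1,\dots,T\}^2:|X_{(i-1)T^{-1}}-Y_{(j-1)T^{-1}}|\leq T^{-\frac12+\epsilon}\}\geq T^{1+3\epsilon}\Big)\leq CT^{-r}.$$ *)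

theory Defs
  imports "HOL-Probability.Probability"
begin

text \<open>Planar Brownian motion on the time interval [0,1], started at x, on the
  probability space M (points of the plane are modelled as real \<times> real with the
  Euclidean norm).\<close>
definition planar_BM :: "'w measure \<Rightarrow> (real \<Rightarrow> 'w \<Rightarrow> real \<times> real) \<Rightarrow> real \<times> real \<Rightarrow> bool" where
  "planar_BM M X x \<longleftrightarrow>
     prob_space M \<and>
     (\<forall>t\<in>{0..1}. X t \<in> borel_measurable M) \<and>
     (AE \<omega> in M. X 0 \<omega> = x) \<and>
     (AE \<omega> in M. continuous_on {0..1} (\<lambda>t. X t \<omega>)) \<and>
     (\<forall>ts::real list. sorted_wrt (<) ts \<and> set ts \<subseteq> {0..1} \<longrightarrow>
        prob_space.indep_vars M (\<lambda>_. borel)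
          (\<lambda>k \<omega>. X (ts ! Suc k) \<omega> - X (ts ! k) \<omega>) {..<length ts - 1}) \<and>
     (\<forall>s t. 0 \<le> s \<and> s < t \<and> t \<le> 1 \<longrightarrow>
        distr M borel (\<lambda>\<omega>. X t \<omega> - X s \<omega>) =
        density lborel (\<lambda>z. ennreal (normal_density 0 (sqrt (t - s)) (fst z) *
                                     normal_density 0 (sqrt (t - s)) (snd z))))"

definition indep_planar_BMs ::
  "'w measure \<Rightarrow> (real \<Rightarrow> 'w \<Rightarrow> real \<times> real) \<Rightarrow> (real \<Rightarrow> 'w \<Rightarrow> real \<times> real)
     \<Rightarrow> real \<times> real \<Rightarrow> real \<times> real \<Rightarrow> bool" where
  "indep_planar_BMs M X Y x y \<longleftrightarrow>
     planar_BM M X x \<and> planar_BM M Y y \<and>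
     prob_space.indep_var M
       (Pi\<^sub>M {0..1} (\<lambda>_. borel)) (\<lambda>\<omega>. \<lambda>t\<in>{0..1}. X t \<omega>)
       (Pi\<^sub>M {0..1} (\<lambda>_. borel)) (\<lambda>\<omega>. \<lambda>t\<in>{0..1}. Y t \<omega>)"

definition close_set ::
  "(real \<Rightarrow> 'w \<Rightarrow> real \<times> real) \<Rightarrow> (real \<Rightarrow> 'w \<Rightarrow> real \<times> real) \<Rightarrow> nat \<Rightarrow> real \<Rightarrow> nat \<Rightarrow> 'w \<Rightarrow> nat set" where
  "close_set X Y T \<epsilon> j \<omega> = {i \<in> {1..T}.
      dist (X (real (i - 1) / real T) \<omega>) (Y (real (j - 1) / real T) \<omega>) \<le> real T powr (-1/2 + \<epsilon>)}"

definition close_pairs ::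
  "(real \<Rightarrow> 'w \<Rightarrow> real \<times> real) \<Rightarrow> (real \<Rightarrow> 'w \<Rightarrow> real \<times> real) \<Rightarrow> nat \<Rightarrow> real \<Rightarrow> 'w \<Rightarrow> (nat \<times> nat) set" where
  "close_pairs X Y T \<epsilon> \<omega> = {(i, j) \<in> {1..T} \<times> {1..T}.
      dist (X (real (i - 1) / real T) \<omega>) (Y (real (j - 1) / real T) \<omega>) \<le> real T powr (-1/2 + \<epsilon>)}"

end

(*
  Fix j and write rho = T powr (-1/2 + eps).  If #T_j >= K, then T_j has at least
  binom(K, k+1) >= (K/(k+1))^(k+1) subsets {i_0 < ... < i_k}, and for each of them consecutive
  values of X at the grid times (i_a - 1)/T are within 2 rho of each other, because all of them
  are within rho of the single point Y((j-1)/T).  By independence of the increments of X and the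
  Gaussian small-ball estimate P(|X_t - X_s| <= delta) <= delta^2/(t - s), this small-steps event
  has probability at most prod_a 4 rho^2 T / (i_(a+1) - i_a); summing over all subsets by peeling
  off the least element gives at most T (4 T^(2 eps) H_T)^k, with H_T the harmonic number.
  Markov's inequality for the number of subsets whose small-steps event occurs, with
  K = T^(3 eps), gives P(#T_j >= T^(3 eps)) = O(T^(1 + 2 eps k - 3 eps (k+1)) (log T)^k), which is
  O(T^(-r-1)) once k is large.  Y enters only through the triangle inequality.  Since the number of close pairs is sum_j #T_j, the second
  bound follows by a union bound over j.
*)
theory Submission
  imports Defs
begin

definition gap_weight :: "real \<Rightarrow> nat list \<Rightarrow> real" where
  "gap_weight A l = (\<Prod>a<length l - 1. A / (real (l ! Suc a) - real (l ! a)))"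

lemma gap_weight_singleton [simp]: "gap_weight A [a] = 1"
  by (simp add: gap_weight_def)

lemma gap_weight_Cons_Cons:
  "gap_weight A (a # b # l) = A / (real b - real a) * gap_weight A (b # l)"
  unfolding gap_weight_def by (simp add: prod.lessThan_Suc_shift del: prod.lessThan_Suc)

lemma sorted_list_of_set_insert_less:
  assumes "S \<subseteq> {b<..(T::nat)}"
  shows "sorted_list_of_set (insert b S) = b # sorted_list_of_set S"
proof -
  have "finite S" using assms by (rule finite_subset) simp
  moreover have "Min (insert b S) = b" using assms \<open>finite S\<close> by (intro Min_eqI) auto
  moreover have "insert b S - {b} = S" using assms by auto
  ultimately show ?thesis
    using sorted_list_of_set_nonempty[of "insert b S"] by simp
qed

lemma sum_subsets_Suc_card_by_Min:
  "(\<Sum>S | S \<subseteq> {a<..(T::nat)} \<and> card S = Suc k. f S) =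
   (\<Sum>b\<in>{a<..T}. \<Sum>S | S \<subseteq> {b<..T} \<and> card S = k. f (insert b S))"
proof -
  have bij: "bij_betw (\<lambda>(b, S). insert b S) (SIGMA b:{a<..T}. {S. S \<subseteq> {b<..T} \<and> card S = k})
      {S. S \<subseteq> {a<..T} \<and> card S = Suc k}"
  proof (rule bij_betw_byWitness[where f' = "\<lambda>S. (Min S, S - {Min S})"])
    have "Min (insert b S) = b" if "S \<subseteq> {b<..T}" for b S
      using that by (intro Min_eqI) (auto dest: finite_subset[OF _ finite_greaterThanAtMost])
    then show "\<forall>x\<in>SIGMA b:{a<..T}. {S. S \<subseteq> {b<..T} \<and> card S = k}.
        (\<lambda>S. (Min S, S - {Min S})) ((\<lambda>(b, S). insert b S) x) = x"
      by auto
    show "\<forall>S\<in>{S. S \<subseteq> {a<..T} \<and> card S = Suc k}. (\<lambda>(b, S). insert b S) (Min S, S - {Min S}) = S"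
      by (auto intro: Min_in dest: finite_subset[OF _ finite_greaterThanAtMost])
    have "card (insert b S) = Suc (card S)" if "S \<subseteq> {b<..T}" for b S
      using that by (subst card_insert_disjoint) (auto dest: finite_subset[OF _ finite_greaterThanAtMost])
    then show "(\<lambda>(b, S). insert b S) ` (SIGMA b:{a<..T}. {S. S \<subseteq> {b<..T} \<and> card S = k})
        \<subseteq> {S. S \<subseteq> {a<..T} \<and> card S = Suc k}"
      by auto
    have "Min S \<in> {a<..T} \<and> S - {Min S} \<subseteq> {Min S<..T} \<and> card (S - {Min S}) = k"
      if S: "S \<subseteq> {a<..T}" "card S = Suc k" for S
    proof -
      from S have "finite S" "S \<noteq> {}" by (auto dest: finite_subset[OF _ finite_greaterThanAtMost])
      then have "Min S \<in> S" by simp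
      moreover have "S - {Min S} \<subseteq> {Min S<..T}"
        using S \<open>finite S\<close> by (auto simp: less_le)
      ultimately show ?thesis using S \<open>finite S\<close> by auto
    qed
    then show "(\<lambda>S. (Min S, S - {Min S})) ` {S. S \<subseteq> {a<..T} \<and> card S = Suc k}
        \<subseteq> (SIGMA b:{a<..T}. {S. S \<subseteq> {b<..T} \<and> card S = k})"
      by auto
  qed
  show ?thesis
    by (subst sum.reindex_bij_betw[OF bij, symmetric], subst sum.Sigma) (auto simp: case_prod_beta)
qed

lemma sum_inverse_gaps_le_harm: "(\<Sum>b\<in>{a<..(T::nat)}. 1 / (real b - real a)) \<le> harm T"
proof -
  have "(\<Sum>b\<in>{a<..T}. 1 / (real b - real a)) = harm (T - a)"
    unfolding harm_def
    by (rule sum.reindex_bij_witness[where i = "\<lambda>m. m + a" and j = "\<lambda>b. b - a"])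
       (auto simp: of_nat_diff divide_inverse)
  also have "\<dots> \<le> harm T" by (rule harm_mono) simp
  finally show ?thesis .
qed

lemma sum_gap_weight_Cons_le:
  assumes "A \<ge> 0"
  shows "(\<Sum>S | S \<subseteq> {a<..(T::nat)} \<and> card S = k. gap_weight A (a # sorted_list_of_set S))
    \<le> (A * harm T) ^ k"
proof (induction k arbitrary: a)
  case 0
  have "{S. S \<subseteq> {a<..T} \<and> card S = 0} = {{}}"
    by (auto dest: finite_subset[OF _ finite_greaterThanAtMost])
  then show ?case by simp
next
  case (Suc k)
  have "(\<Sum>S | S \<subseteq> {a<..T} \<and> card S = Suc k. gap_weight A (a # sorted_list_of_set S))
      = (\<Sum>b\<in>{a<..T}. A / (real b - real a) *
          (\<Sum>S | S \<subseteq> {b<..T} \<and> card S = k. gap_weight A (b # sorted_list_of_set S)))"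
    unfolding sum_subsets_Suc_card_by_Min sum_distrib_left
    by (intro sum.cong refl) (auto simp: sorted_list_of_set_insert_less gap_weight_Cons_Cons)
  also have "\<dots> \<le> (\<Sum>b\<in>{a<..T}. A / (real b - real a) * (A * harm T) ^ k)"
    using assms by (intro sum_mono mult_left_mono Suc.IH) auto
  also have "\<dots> = A * (A * harm T) ^ k * (\<Sum>b\<in>{a<..T}. 1 / (real b - real a))"
    by (simp add: sum_distrib_left)
  also have "\<dots> \<le> A * (A * harm T) ^ k * harm T"
    using assms by (intro mult_left_mono sum_inverse_gaps_le_harm) (auto simp: harm_nonneg)
  finally show ?case by (simp add: algebra_simps)
qed

lemma sum_gap_weight_le:
  assumes "A \<ge> 0"
  shows "(\<Sum>S | S \<subseteq> {0<..(T::nat)} \<and> card S = Suc k. gap_weight A (sorted_list_of_set S))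
    \<le> real T * (A * harm T) ^ k"
proof -
  have "(\<Sum>S | S \<subseteq> {0<..T} \<and> card S = Suc k. gap_weight A (sorted_list_of_set S))
      = (\<Sum>b\<in>{0<..T}. \<Sum>S | S \<subseteq> {b<..T} \<and> card S = k. gap_weight A (b # sorted_list_of_set S))"
    unfolding sum_subsets_Suc_card_by_Min
    by (intro sum.cong refl) (auto simp: sorted_list_of_set_insert_less)
  also have "\<dots> \<le> (\<Sum>b\<in>{0<..T}. (A * harm T) ^ k)"
    by (intro sum_mono sum_gap_weight_Cons_le assms)
  finally show ?thesis by simp
qed

lemma harm_le_powr:
  assumes "n \<ge> 1" "k \<ge> 1"
  shows "harm n \<le> (1 + real k) * real n powr (1 / real k)"
proof -
  have "harm n - ln (real n) \<le> harm 1 - ln (real (1::nat))"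
    by (rule euler_mascheroni_sequence_decreasing) (use assms in auto)
  then have "harm n \<le> 1 + ln (real n)" by (simp add: harm_expand)
  moreover have "ln (real n) \<le> real k * real n powr (1 / real k)"
    using ln_powr_bound[of "real n" "1 / real k"] assms by (simp add: field_simps)
  moreover have "1 \<le> real n powr (1 / real k)" using assms by (simp add: ge_one_powr_ge_zero)
  ultimately show ?thesis by (simp add: algebra_simps)
qed

lemma borel_measurable_card_Collect:
  assumes "finite I" "\<And>i. i \<in> I \<Longrightarrow> Measurable.pred M (P i)"
  shows "(\<lambda>\<omega>. real (card {i \<in> I. P i \<omega>})) \<in> borel_measurable M"
proof -
  have "(\<lambda>\<omega>. \<Sum>i\<in>I. if P i \<omega> then 1 else 0 :: real) \<in> borel_measurable M"
    using assms(2) by (intro borel_measurable_sum measurable_If) auto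
  then show ?thesis
    using assms(1) by (simp only: real_of_card sum.inter_filter)
qed

lemma (in finite_measure) measure_multiply_covered_le:
  assumes "finite I" and F: "\<And>i. i \<in> I \<Longrightarrow> F i \<in> sets M" and "c > 0" and "A \<subseteq> space M"
    and covered: "\<And>\<omega>. \<omega> \<in> A \<Longrightarrow> c \<le> real (card {i \<in> I. \<omega> \<in> F i})"
  shows "measure M A \<le> (\<Sum>i\<in>I. measure M (F i)) / c"
proof -
  have card_eq: "real (card {i \<in> I. \<omega> \<in> F i}) = (\<Sum>i\<in>I. indicator (F i) \<omega>)" for \<omega>
    using assms(1) unfolding indicator_def of_bool_def by (simp only: real_of_card sum.inter_filter)
  have integrable: "integrable M (\<lambda>\<omega>. \<Sum>i\<in>I. indicator (F i) \<omega> :: real)"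
    using F by (intro Bochner_Integration.integrable_sum integrable_real_indicator)
      (auto simp: less_top[symmetric])
  have "measure M A \<le> measure M {\<omega> \<in> space M. c \<le> (\<Sum>i\<in>I. indicator (F i) \<omega>)}"
  proof (rule finite_measure_mono)
    show "A \<subseteq> {\<omega> \<in> space M. c \<le> (\<Sum>i\<in>I. indicator (F i) \<omega>)}"
      using \<open>A \<subseteq> space M\<close> covered by (auto simp flip: card_eq)
    show "{\<omega> \<in> space M. c \<le> (\<Sum>i\<in>I. indicator (F i) \<omega>)} \<in> sets M"
      using F by (intro predE borel_measurable_le borel_measurable_sum borel_measurable_indicator) auto
  qed
  also have "\<dots> \<le> (\<integral>\<omega>. (\<Sum>i\<in>I. indicator (F i) \<omega>) \<partial>M) / c"
    using integrable \<open>c > 0\<close>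
    by (intro integral_Markov_inequality_measure[where A = "space M"]) (auto intro!: sum_nonneg)
  also have "(\<integral>\<omega>. (\<Sum>i\<in>I. indicator (F i) \<omega>) \<partial>M) = (\<Sum>i\<in>I. measure M (F i))"
    using F by (subst Bochner_Integration.integral_sum) (auto simp: less_top[symmetric])
  finally show ?thesis .
qed

lemma normal_density_times_le:
  assumes "\<sigma> > 0"
  shows "normal_density 0 \<sigma> a * normal_density 0 \<sigma> b \<le> 1 / (2 * pi * \<sigma>\<^sup>2)"
proof -
  have bound: "normal_density 0 \<sigma> a \<le> 1 / sqrt (2 * pi * \<sigma>\<^sup>2)" for a
    unfolding normal_density_def by (intro mult_left_le) auto
  have "normal_density 0 \<sigma> a * normal_density 0 \<sigma> b \<le> 1 / sqrt (2 * pi * \<sigma>\<^sup>2) * (1 / sqrt (2 * pi * \<sigma>\<^sup>2))"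
    by (intro mult_mono bound normal_density_nonneg) auto
  also have "\<dots> = 1 / (2 * pi * \<sigma>\<^sup>2)"
    by (simp add: power_divide flip: power2_eq_square)
  finally show ?thesis .
qed

lemma cball_subset_square: "cball (0 :: real \<times> real) \<delta> \<subseteq> {-\<delta>..\<delta>} \<times> {-\<delta>..\<delta>}"
proof
  fix z :: "real \<times> real" assume "z \<in> cball 0 \<delta>"
  then have "\<bar>fst z\<bar> \<le> \<delta>" "\<bar>snd z\<bar> \<le> \<delta>"
    using norm_fst_le[of "fst z" "snd z"] norm_snd_le[of "snd z" "fst z"] by auto
  then show "z \<in> {-\<delta>..\<delta>} \<times> {-\<delta>..\<delta>}" by (auto simp: mem_Times_iff)
qed

lemma emeasure_normal_pair_cball_le:
  assumes "\<sigma> > 0"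
  shows "emeasure (density lborel (\<lambda>z::real \<times> real.
            ennreal (normal_density 0 \<sigma> (fst z) * normal_density 0 \<sigma> (snd z)))) (cball 0 \<delta>)
         \<le> ennreal (\<delta>\<^sup>2 / \<sigma>\<^sup>2)"
proof (cases "\<delta> \<ge> 0")
  case False
  then show ?thesis by simp
next
  case True
  define c where "c = 1 / (2 * pi * \<sigma>\<^sup>2)"
  define B where "B = {-\<delta>..\<delta>} \<times> {-\<delta>..\<delta>}"
  have "emeasure (density lborel (\<lambda>z::real \<times> real.
            ennreal (normal_density 0 \<sigma> (fst z) * normal_density 0 \<sigma> (snd z)))) (cball 0 \<delta>)
      = (\<integral>\<^sup>+ z. ennreal (normal_density 0 \<sigma> (fst z) * normal_density 0 \<sigma> (snd z))
           * indicator (cball 0 \<delta>) z \<partial>lborel)"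
    by (rule emeasure_density) (simp add: lborel_prod[symmetric], simp)
  also have "\<dots> \<le> (\<integral>\<^sup>+ z. ennreal c * indicator B z \<partial>lborel)"
    using cball_subset_square[of \<delta>] normal_density_times_le[OF assms]
    by (intro nn_integral_mono) (auto simp: B_def c_def intro: ennreal_leI split: split_indicator)
  also have "\<dots> = ennreal c * emeasure lborel B"
    by (rule nn_integral_cmult_indicator) (auto simp: B_def intro!: borel_closed closed_Times)
  also have "\<dots> = ennreal (c * (2 * \<delta>) * (2 * \<delta>))"
    using True unfolding B_def
    by (simp add: lborel_prod[symmetric] lborel.emeasure_pair_measure_Times c_def ennreal_mult[symmetric])
  also have "\<dots> \<le> ennreal (\<delta>\<^sup>2 / \<sigma>\<^sup>2)"
  proof (rule ennreal_leI)
    have "c * (2 * \<delta>) * (2 * \<delta>) = (2 / pi) * (\<delta>\<^sup>2 / \<sigma>\<^sup>2)"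
      using assms by (simp add: c_def field_simps power2_eq_square)
    also have "\<dots> \<le> \<delta>\<^sup>2 / \<sigma>\<^sup>2"
      using pi_gt3 by (intro mult_left_le_one_le) auto
    finally show "c * (2 * \<delta>) * (2 * \<delta>) \<le> \<delta>\<^sup>2 / \<sigma>\<^sup>2" .
  qed
  finally show ?thesis .
qed

lemma planar_BM_prob_space: "planar_BM M X x \<Longrightarrow> prob_space M"
  unfolding planar_BM_def by blast

lemma planar_BM_measurable: "planar_BM M X x \<Longrightarrow> t \<in> {0..1} \<Longrightarrow> X t \<in> borel_measurable M"
  unfolding planar_BM_def by blast

lemma planar_BM_increment_small_ball:
  assumes BM: "planar_BM M X x" and "0 \<le> s" "s < t" "t \<le> 1"
  shows "measure M {\<omega> \<in> space M. dist (X t \<omega>) (X s \<omega>) \<le> \<delta>} \<le> \<delta>\<^sup>2 / (t - s)"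
proof -
  have [measurable]: "X s \<in> borel_measurable M" "X t \<in> borel_measurable M"
    using assms by (auto intro: planar_BM_measurable[OF BM])
  have "{\<omega> \<in> space M. dist (X t \<omega>) (X s \<omega>) \<le> \<delta>} = (\<lambda>\<omega>. X t \<omega> - X s \<omega>) -` cball 0 \<delta> \<inter> space M"
    by (auto simp: mem_cball_0 dist_norm simp del: mem_cball)
  then have "measure M {\<omega> \<in> space M. dist (X t \<omega>) (X s \<omega>) \<le> \<delta>}
      = measure (distr M borel (\<lambda>\<omega>. X t \<omega> - X s \<omega>)) (cball 0 \<delta>)"
    by (simp add: measure_distr)
  also have "\<dots> = measure (density lborel (\<lambda>z. ennreal (normal_density 0 (sqrt (t - s)) (fst z) *
                                     normal_density 0 (sqrt (t - s)) (snd z)))) (cball 0 \<delta>)"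
    using BM assms unfolding planar_BM_def by simp
  also have "\<dots> \<le> \<delta>\<^sup>2 / (sqrt (t - s))\<^sup>2"
    unfolding measure_def using assms
    by (intro enn2real_leI emeasure_normal_pair_cball_le) auto
  finally show ?thesis using assms by simp
qed

lemma planar_BM_small_increments:
  assumes BM: "planar_BM M X x" and ts: "sorted_wrt (<) ts" "set ts \<subseteq> {0..1}"
  shows "measure M {\<omega> \<in> space M. \<forall>a < length ts - 1. dist (X (ts ! Suc a) \<omega>) (X (ts ! a) \<omega>) \<le> \<delta>}
    \<le> (\<Prod>a < length ts - 1. \<delta>\<^sup>2 / (ts ! Suc a - ts ! a))"
proof (cases "length ts - 1 = 0")
  case True
  then show ?thesis
    using planar_BM_prob_space[OF BM] by (simp add: prob_space.prob_le_1)
next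
  case False
  define n where "n = length ts - 1"
  have "{..<n} \<noteq> {}" using False by (auto simp: n_def lessThan_empty_iff)
  interpret prob_space M by (rule planar_BM_prob_space[OF BM])
  have incr: "0 \<le> ts ! a" "ts ! a < ts ! Suc a" "ts ! Suc a \<le> 1" if "a < n" for a
  proof -
    have "ts ! a \<in> set ts" "ts ! Suc a \<in> set ts" using that by (auto simp: n_def)
    then show "0 \<le> ts ! a" "ts ! Suc a \<le> 1" using ts(2) by auto
    show "ts ! a < ts ! Suc a" using that ts(1) by (simp add: n_def sorted_wrt_nth_less)
  qed
  have indep: "indep_vars (\<lambda>_. borel) (\<lambda>a \<omega>. X (ts ! Suc a) \<omega> - X (ts ! a) \<omega>) {..<n}"
    using BM ts unfolding planar_BM_def n_def by simp
  have "{\<omega> \<in> space M. \<forall>a < n. dist (X (ts ! Suc a) \<omega>) (X (ts ! a) \<omega>) \<le> \<delta>}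
      = (\<Inter>a\<in>{..<n}. (\<lambda>\<omega>. X (ts ! Suc a) \<omega> - X (ts ! a) \<omega>) -` cball 0 \<delta> \<inter> space M)"
    using \<open>{..<n} \<noteq> {}\<close> by (auto simp: mem_cball_0 dist_norm simp del: mem_cball)
  also have "measure M \<dots> = (\<Prod>a<n. measure M ((\<lambda>\<omega>. X (ts ! Suc a) \<omega> - X (ts ! a) \<omega>) -` cball 0 \<delta> \<inter> space M))"
    using \<open>{..<n} \<noteq> {}\<close> by (intro indep_varsD_finite[OF indep]) auto
  also have "\<dots> = (\<Prod>a<n. measure M {\<omega> \<in> space M. dist (X (ts ! Suc a) \<omega>) (X (ts ! a) \<omega>) \<le> \<delta>})"
    by (intro prod.cong refl arg_cong[where f = "measure M"]) (auto simp: mem_cball_0 dist_norm simp del: mem_cball)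
  also have "\<dots> \<le> (\<Prod>a<n. \<delta>\<^sup>2 / (ts ! Suc a - ts ! a))"
    using incr by (intro prod_mono conjI measure_nonneg planar_BM_increment_small_ball[OF BM]) auto
  finally show ?thesis by (simp add: n_def)
qed

definition grid_time :: "nat \<Rightarrow> nat \<Rightarrow> real" where
  "grid_time T i = real (i - 1) / real T"

lemma grid_time_in_unit: "i \<in> {1..T} \<Longrightarrow> grid_time T i \<in> {0..1}"
  by (auto simp: grid_time_def field_simps)

lemma grid_time_diff:
  "1 \<le> i \<Longrightarrow> 1 \<le> i' \<Longrightarrow> grid_time T i' - grid_time T i = (real i' - real i) / real T"
  by (simp add: grid_time_def of_nat_diff diff_divide_distrib)

lemma grid_time_strict_mono:
  assumes "T \<ge> 1" "1 \<le> i" "i < i'"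
  shows "grid_time T i < grid_time T i'"
proof -
  have "0 < (real i' - real i) / real T" using assms by simp
  with grid_time_diff[of i i' T] assms show ?thesis by linarith
qed

lemma close_set_grid_time:
  "close_set X Y T \<epsilon> j \<omega> =
     {i \<in> {1..T}. dist (X (grid_time T i) \<omega>) (Y (grid_time T j) \<omega>) \<le> real T powr (-1/2 + \<epsilon>)}"
  unfolding close_set_def grid_time_def ..

definition small_steps_event ::
  "'w measure \<Rightarrow> (real \<Rightarrow> 'w \<Rightarrow> real \<times> real) \<Rightarrow> nat \<Rightarrow> real \<Rightarrow> nat set \<Rightarrow> 'w set" where
  "small_steps_event M X T \<delta> S = {\<omega> \<in> space M. \<forall>a < card S - 1.
     dist (X (grid_time T (sorted_list_of_set S ! Suc a)) \<omega>) (X (grid_time T (sorted_list_of_set S ! a)) \<omega>) \<le> \<delta>}"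

lemma small_steps_event_sets:
  assumes BM: "planar_BM M X x" and S: "S \<subseteq> {1..T}"
  shows "small_steps_event M X T \<delta> S \<in> sets M"
proof -
  have "finite S" using S by (rule finite_subset) simp
  have [measurable]: "X (grid_time T (sorted_list_of_set S ! a)) \<in> borel_measurable M" if "a < card S" for a
  proof -
    have "sorted_list_of_set S ! a \<in> S" using that \<open>finite S\<close> nth_mem[of a "sorted_list_of_set S"] by simp
    then show ?thesis using S by (intro planar_BM_measurable[OF BM] grid_time_in_unit) auto
  qed
  show ?thesis unfolding small_steps_event_def by measurable
qed

lemma measure_small_steps_event_le:
  assumes BM: "planar_BM M X x" and T: "T \<ge> 1" and S: "S \<subseteq> {1..T}"
  shows "measure M (small_steps_event M X T \<delta> S) \<le> gap_weight (\<delta>\<^sup>2 * real T) (sorted_list_of_set S)"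
proof -
  define l where "l = sorted_list_of_set S"
  define ts where "ts = map (grid_time T) l"
  have "finite S" using S by (rule finite_subset) simp
  then have l: "sorted_wrt (<) l" "set l \<subseteq> {1..T}" "length l = card S"
    using S by (auto simp: l_def)
  have "sorted_wrt (<) ts"
    unfolding ts_def sorted_wrt_map
  proof (rule sorted_wrt_mono_rel[OF _ l(1)])
    fix i i' assume "i \<in> set l" "i' \<in> set l" "i < i'"
    then show "grid_time T i < grid_time T i'" using l(2) T by (intro grid_time_strict_mono) auto
  qed
  moreover have "set ts \<subseteq> {0..1}"
    using l(2) grid_time_in_unit by (auto simp: ts_def)
  ultimately have "measure M {\<omega> \<in> space M. \<forall>a < length ts - 1.
      dist (X (ts ! Suc a) \<omega>) (X (ts ! a) \<omega>) \<le> \<delta>} \<le> (\<Prod>a < length ts - 1. \<delta>\<^sup>2 / (ts ! Suc a - ts ! a))"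
    by (rule planar_BM_small_increments[OF BM])
  also have "(\<Prod>a < length ts - 1. \<delta>\<^sup>2 / (ts ! Suc a - ts ! a)) = gap_weight (\<delta>\<^sup>2 * real T) l"
    unfolding gap_weight_def
  proof (intro prod.cong)
    fix a assume "a \<in> {..<length l - 1}"
    then have "l ! a \<in> set l" "l ! Suc a \<in> set l" by auto
    then have "l ! a \<ge> 1" "l ! Suc a \<ge> 1" using l(2) by auto
    then show "\<delta>\<^sup>2 / (ts ! Suc a - ts ! a) = \<delta>\<^sup>2 * real T / (real (l ! Suc a) - real (l ! a))"
      using \<open>a \<in> {..<length l - 1}\<close> by (simp add: ts_def grid_time_diff)
  qed (simp add: ts_def)
  finally show ?thesis by (simp add: small_steps_event_def ts_def l_def)
qed

lemma subset_close_set_in_small_steps_event: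
  assumes "S \<subseteq> close_set X Y T \<epsilon> j \<omega>" "\<omega> \<in> space M"
  shows "\<omega> \<in> small_steps_event M X T (2 * real T powr (-1/2 + \<epsilon>)) S"
  unfolding small_steps_event_def
proof (intro CollectI conjI allI impI \<open>\<omega> \<in> space M\<close>)
  fix a assume "a < card S - 1"
  have "finite S" using assms(1) by (rule finite_subset) (simp add: close_set_def)
  then have "sorted_list_of_set S ! a \<in> S" "sorted_list_of_set S ! Suc a \<in> S"
    using \<open>a < card S - 1\<close> nth_mem[of a "sorted_list_of_set S"] nth_mem[of "Suc a" "sorted_list_of_set S"]
    by auto
  with assms(1) have "dist (X (grid_time T (sorted_list_of_set S ! Suc a)) \<omega>) (Y (grid_time T j) \<omega>)
      \<le> real T powr (-1/2 + \<epsilon>)"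
    "dist (X (grid_time T (sorted_list_of_set S ! a)) \<omega>) (Y (grid_time T j) \<omega>) \<le> real T powr (-1/2 + \<epsilon>)"
    unfolding close_set_grid_time by auto
  then show "dist (X (grid_time T (sorted_list_of_set S ! Suc a)) \<omega>)
      (X (grid_time T (sorted_list_of_set S ! a)) \<omega>) \<le> 2 * real T powr (-1/2 + \<epsilon>)"
    using dist_triangle2[of "X (grid_time T (sorted_list_of_set S ! Suc a)) \<omega>"
        "X (grid_time T (sorted_list_of_set S ! a)) \<omega>" "Y (grid_time T j) \<omega>"] by linarith
qed

lemma card_subsets_ge_power:
  assumes "finite C" "real (Suc k) \<le> K" "K \<le> real (card C)"
  shows "(K / real (Suc k)) ^ Suc k \<le> real (card {S. S \<subseteq> C \<and> card S = Suc k})"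
proof -
  have "(K / real (Suc k)) ^ Suc k \<le> (real (card C) / real (Suc k)) ^ Suc k"
    using assms by (intro power_mono divide_right_mono) auto
  also have "\<dots> \<le> real (card C choose Suc k)"
    using assms by (intro binomial_ge_n_over_k_pow_k) simp
  also have "card C choose Suc k = card {S. S \<subseteq> C \<and> card S = Suc k}"
    using assms by (simp add: n_subsets)
  finally show ?thesis .
qed

lemma close_set_moment_bound:
  assumes BM: "planar_BM M X x" and T: "T \<ge> 1" and K: "real (Suc k) \<le> K"
  shows "measure M {\<omega> \<in> space M. K \<le> real (card (close_set X Y T \<epsilon> j \<omega>))}
    \<le> real T * (4 * real T powr (2 * \<epsilon>) * harm T) ^ k / (K / real (Suc k)) ^ Suc k"
proof -
  interpret prob_space M by (rule planar_BM_prob_space[OF BM])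
  define \<delta> where "\<delta> = 2 * real T powr (-1/2 + \<epsilon>)"
  define SS where "SS = {S. S \<subseteq> {0<..T} \<and> card S = Suc k}"
  have SS_sub: "S \<subseteq> {1..T}" if "S \<in> SS" for S using that by (auto simp: SS_def)
  have "finite SS"
    unfolding SS_def by (rule finite_subset[of _ "Pow {0<..T}"]) auto
  have covered: "(K / real (Suc k)) ^ Suc k \<le> real (card {S \<in> SS. \<omega> \<in> small_steps_event M X T \<delta> S})"
    if "\<omega> \<in> space M" "K \<le> real (card (close_set X Y T \<epsilon> j \<omega>))" for \<omega>
  proof -
    let ?C = "close_set X Y T \<epsilon> j \<omega>"
    have "?C \<subseteq> {1..T}" by (auto simp: close_set_def)
    moreover have "\<omega> \<in> small_steps_event M X T \<delta> S" if "S \<subseteq> ?C" for S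
      unfolding \<delta>_def using that \<open>\<omega> \<in> space M\<close> by (rule subset_close_set_in_small_steps_event)
    ultimately have "{S. S \<subseteq> ?C \<and> card S = Suc k} \<subseteq> {S \<in> SS. \<omega> \<in> small_steps_event M X T \<delta> S}"
      by (auto simp: SS_def)
    then have "card {S. S \<subseteq> ?C \<and> card S = Suc k} \<le> card {S \<in> SS. \<omega> \<in> small_steps_event M X T \<delta> S}"
      using \<open>finite SS\<close> by (intro card_mono) auto
    moreover have "(K / real (Suc k)) ^ Suc k \<le> real (card {S. S \<subseteq> ?C \<and> card S = Suc k})"
      using K that(2) \<open>?C \<subseteq> {1..T}\<close> by (intro card_subsets_ge_power) (auto intro: finite_subset)
    ultimately show ?thesis by linarith
  qed
  have "measure M {\<omega> \<in> space M. K \<le> real (card (close_set X Y T \<epsilon> j \<omega>))}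
      \<le> (\<Sum>S\<in>SS. measure M (small_steps_event M X T \<delta> S)) / (K / real (Suc k)) ^ Suc k"
    using K covered \<open>finite SS\<close> SS_sub
    by (intro measure_multiply_covered_le small_steps_event_sets[OF BM]) auto
  also have "(\<Sum>S\<in>SS. measure M (small_steps_event M X T \<delta> S))
      \<le> (\<Sum>S\<in>SS. gap_weight (\<delta>\<^sup>2 * real T) (sorted_list_of_set S))"
    using SS_sub by (intro sum_mono measure_small_steps_event_le[OF BM T])
  also have "\<dots> \<le> real T * (\<delta>\<^sup>2 * real T * harm T) ^ k"
    unfolding SS_def by (rule sum_gap_weight_le) simp
  also have "\<delta>\<^sup>2 * real T = 4 * (real T powr (2 * (-1/2 + \<epsilon>)) * real T powr 1)"
    using T by (simp add: \<delta>_def power_mult_distrib powr_power)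
  also have "\<dots> = 4 * real T powr (2 * \<epsilon>)"
    by (subst powr_add[symmetric]) (simp add: algebra_simps)
  finally show ?thesis using K by (simp add: divide_right_mono)
qed

lemma moment_estimate_powr:
  fixes t \<epsilon> s H :: real and k :: nat
  assumes t: "t \<ge> 1" and k: "k \<ge> 1" "\<epsilon> * real k \<ge> s + 2" "\<epsilon> > 0"
    and H: "0 \<le> H" "H \<le> (1 + real k) * t powr (1 / real k)"
  shows "t * (4 * t powr (2 * \<epsilon>) * H) ^ k / (t powr (3 * \<epsilon>) / real (Suc k)) ^ Suc k
    \<le> (4 * (1 + real k)) ^ k * real (Suc k) ^ Suc k * t powr (- s)"
proof -
  define D where "D = (4 * (1 + real k)) ^ k"
  have "t * (4 * t powr (2 * \<epsilon>) * H) ^ k \<le> t * (4 * t powr (2 * \<epsilon>) * ((1 + real k) * t powr (1 / real k))) ^ k"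
    using t H by (intro mult_left_mono power_mono) auto
  also have "4 * t powr (2 * \<epsilon>) * ((1 + real k) * t powr (1 / real k))
      = 4 * (1 + real k) * t powr (2 * \<epsilon> + 1 / real k)"
    by (simp add: powr_add mult_ac)
  also have "t * (4 * (1 + real k) * t powr (2 * \<epsilon> + 1 / real k)) ^ k
      = D * (t powr 1 * (t powr (2 * \<epsilon> + 1 / real k)) ^ k)"
    using t by (simp add: D_def power_mult_distrib)
  also have "(t powr (2 * \<epsilon> + 1 / real k)) ^ k = t powr (real k * (2 * \<epsilon> + 1 / real k))"
    using t by (simp add: powr_power)
  also have "real k * (2 * \<epsilon> + 1 / real k) = 2 * \<epsilon> * real k + 1"
    using k by (simp add: field_simps)
  also have "t powr 1 * t powr (2 * \<epsilon> * real k + 1) = t powr (2 * \<epsilon> * real k + 2)"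
    by (subst powr_add[symmetric]) (simp add: algebra_simps)
  finally have num: "t * (4 * t powr (2 * \<epsilon>) * H) ^ k \<le> D * t powr (2 * \<epsilon> * real k + 2)" .
  have den: "(t powr (3 * \<epsilon>) / real (Suc k)) ^ Suc k = t powr (real (Suc k) * (3 * \<epsilon>)) / real (Suc k) ^ Suc k"
    using t by (simp only: power_divide powr_power)
  have "t * (4 * t powr (2 * \<epsilon>) * H) ^ k / (t powr (3 * \<epsilon>) / real (Suc k)) ^ Suc k
      = t * (4 * t powr (2 * \<epsilon>) * H) ^ k * real (Suc k) ^ Suc k / t powr (real (Suc k) * (3 * \<epsilon>))"
    unfolding den by simp
  also have "\<dots> \<le> D * t powr (2 * \<epsilon> * real k + 2) * real (Suc k) ^ Suc k / t powr (real (Suc k) * (3 * \<epsilon>))"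
    by (intro divide_right_mono mult_right_mono num) auto
  also have "\<dots> = D * real (Suc k) ^ Suc k * (t powr (2 * \<epsilon> * real k + 2) / t powr (real (Suc k) * (3 * \<epsilon>)))"
    by simp
  also have "t powr (2 * \<epsilon> * real k + 2) / t powr (real (Suc k) * (3 * \<epsilon>)) \<le> t powr (- s)"
    unfolding powr_diff[symmetric] using t k by (intro powr_mono) (auto simp: algebra_simps)
  finally show ?thesis
    by (simp add: D_def mult_left_mono)
qed

lemma close_set_tail_bound:
  assumes "\<epsilon> > 0" "s \<ge> 0"
  obtains C where "C \<ge> 0"
    "\<And>T j (M :: 'w measure) X Y x. planar_BM M X x \<Longrightarrow> T \<ge> 1 \<Longrightarrow>
       measure M {\<omega> \<in> space M. real T powr (3 * \<epsilon>) \<le> real (card (close_set X Y T \<epsilon> j \<omega>))}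
         \<le> C * real T powr (- s)"
proof -
  obtain n :: nat where "(s + 2) / \<epsilon> \<le> real n" using real_arch_simple by blast
  then obtain k :: nat where k: "k \<ge> 1" "\<epsilon> * real k \<ge> s + 2"
    using assms by (intro that[of "Suc n"]) (auto simp: field_simps)
  define C where "C = max ((4 * (1 + real k)) ^ k * real (Suc k) ^ Suc k) (real (Suc k) powr (s / (3 * \<epsilon>)))"
  have "C \<ge> 0" by (simp add: C_def le_max_iff_disj)
  moreover have "measure M {\<omega> \<in> space M. real T powr (3 * \<epsilon>) \<le> real (card (close_set X Y T \<epsilon> j \<omega>))}
      \<le> C * real T powr (- s)" if BM: "planar_BM M X x" and T: "T \<ge> 1"
    for T j and M :: "'w measure" and X Y x
  proof (cases "real (Suc k) \<le> real T powr (3 * \<epsilon>)")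
    case True
    have "measure M {\<omega> \<in> space M. real T powr (3 * \<epsilon>) \<le> real (card (close_set X Y T \<epsilon> j \<omega>))}
        \<le> real T * (4 * real T powr (2 * \<epsilon>) * harm T) ^ k / (real T powr (3 * \<epsilon>) / real (Suc k)) ^ Suc k"
      by (rule close_set_moment_bound[OF BM T True])
    also have "\<dots> \<le> (4 * (1 + real k)) ^ k * real (Suc k) ^ Suc k * real T powr (- s)"
      using T k assms harm_le_powr[OF T k(1)] by (intro moment_estimate_powr) (auto simp: harm_nonneg)
    also have "\<dots> \<le> C * real T powr (- s)"
      by (intro mult_right_mono) (auto simp: C_def)
    finally show ?thesis .
  next
    case False
    interpret prob_space M by (rule planar_BM_prob_space[OF BM])
    have "real T powr s = (real T powr (3 * \<epsilon>)) powr (s / (3 * \<epsilon>))"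
      using assms by (simp add: powr_powr)
    also have "\<dots> \<le> real (Suc k) powr (s / (3 * \<epsilon>))"
      using False assms by (intro powr_mono2) auto
    also have "\<dots> \<le> C" by (simp add: C_def)
    finally have "real T powr s \<le> C" .
    have "measure M {\<omega> \<in> space M. real T powr (3 * \<epsilon>) \<le> real (card (close_set X Y T \<epsilon> j \<omega>))} \<le> 1"
      by (rule prob_le_1)
    also have "1 = real T powr s * real T powr (- s)"
      using T by (simp add: powr_minus)
    also have "\<dots> \<le> C * real T powr (- s)"
      using \<open>real T powr s \<le> C\<close> by (intro mult_right_mono) auto
    finally show ?thesis .
  qed
  ultimately show ?thesis by (rule that)
qed

lemma card_close_pairs:
  "card (close_pairs X Y T \<epsilon> \<omega>) = (\<Sum>j\<in>{1..T}. card (close_set X Y T \<epsilon> j \<omega>))"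
proof -
  have "close_pairs X Y T \<epsilon> \<omega> = (\<lambda>(j, i). (i, j)) ` (SIGMA j:{1..T}. close_set X Y T \<epsilon> j \<omega>)"
    by (auto simp: close_pairs_def close_set_def image_iff)
  then have "card (close_pairs X Y T \<epsilon> \<omega>) = card (SIGMA j:{1..T}. close_set X Y T \<epsilon> j \<omega>)"
    by (simp add: card_image inj_on_def)
  also have "\<dots> = (\<Sum>j\<in>{1..T}. card (close_set X Y T \<epsilon> j \<omega>))"
    by (rule card_SigmaI) (auto simp: close_set_def)
  finally show ?thesis .
qed

lemma close_set_event_measurable:
  assumes X: "\<And>t. t \<in> {0..1} \<Longrightarrow> X t \<in> borel_measurable M"
    and Y: "\<And>t. t \<in> {0..1} \<Longrightarrow> Y t \<in> borel_measurable M" and j: "j \<in> {1..T}"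
  shows "{\<omega> \<in> space M. K \<le> real (card (close_set X Y T \<epsilon> j \<omega>))} \<in> sets M"
proof -
  have [measurable]: "Y (grid_time T j) \<in> borel_measurable M"
    by (intro Y grid_time_in_unit j)
  have "(\<lambda>\<omega>. real (card (close_set X Y T \<epsilon> j \<omega>))) \<in> borel_measurable M"
    unfolding close_set_grid_time
  proof (rule borel_measurable_card_Collect)
    fix i :: nat assume "i \<in> {1..T}"
    then have [measurable]: "X (grid_time T i) \<in> borel_measurable M"
      by (intro X grid_time_in_unit)
    show "Measurable.pred M (\<lambda>\<omega>. dist (X (grid_time T i) \<omega>) (Y (grid_time T j) \<omega>) \<le> real T powr (-1/2 + \<epsilon>))"
      by measurable
  qed simp
  then show ?thesis by measurable
qed

lemma (in finite_measure) measure_close_pairs_le_sum: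
  assumes X: "\<And>t. t \<in> {0..1} \<Longrightarrow> X t \<in> borel_measurable M"
    and Y: "\<And>t. t \<in> {0..1} \<Longrightarrow> Y t \<in> borel_measurable M" and T: "T \<ge> 1"
  shows "measure M {\<omega> \<in> space M. real T powr (1 + 3 * \<epsilon>) \<le> real (card (close_pairs X Y T \<epsilon> \<omega>))}
    \<le> (\<Sum>j\<in>{1..T}. measure M {\<omega> \<in> space M. real T powr (3 * \<epsilon>) \<le> real (card (close_set X Y T \<epsilon> j \<omega>))})"
proof -
  define E where "E j = {\<omega> \<in> space M. real T powr (3 * \<epsilon>) \<le> real (card (close_set X Y T \<epsilon> j \<omega>))}" for j
  have E_sets: "E j \<in> sets M" if "j \<in> {1..T}" for j
    unfolding E_def using X Y that by (rule close_set_event_measurable)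
  have "{\<omega> \<in> space M. real T powr (1 + 3 * \<epsilon>) \<le> real (card (close_pairs X Y T \<epsilon> \<omega>))} \<subseteq> (\<Union>j\<in>{1..T}. E j)"
  proof safe
    fix \<omega> assume \<omega>: "\<omega> \<in> space M" and many: "real T powr (1 + 3 * \<epsilon>) \<le> real (card (close_pairs X Y T \<epsilon> \<omega>))"
    show "\<omega> \<in> (\<Union>j\<in>{1..T}. E j)"
    proof (rule ccontr)
      assume "\<omega> \<notin> (\<Union>j\<in>{1..T}. E j)"
      then have "\<omega> \<notin> E j" if "j \<in> {1..T}" for j using that by blast
      then have "real (card (close_set X Y T \<epsilon> j \<omega>)) < real T powr (3 * \<epsilon>)" if "j \<in> {1..T}" for j
        using that \<omega> by (simp add: E_def not_le)
      then have "real (card (close_pairs X Y T \<epsilon> \<omega>)) < (\<Sum>j\<in>{1..T}. real T powr (3 * \<epsilon>))"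
        unfolding card_close_pairs of_nat_sum using T by (intro sum_strict_mono) auto
      also have "\<dots> = real T powr (1 + 3 * \<epsilon>)"
        using T by (simp add: powr_add)
      finally show False using many by simp
    qed
  qed
  then have "measure M {\<omega> \<in> space M. real T powr (1 + 3 * \<epsilon>) \<le> real (card (close_pairs X Y T \<epsilon> \<omega>))}
      \<le> measure M (\<Union>j\<in>{1..T}. E j)"
    using E_sets by (intro finite_measure_mono) auto
  also have "\<dots> \<le> (\<Sum>j\<in>{1..T}. measure M (E j))"
    using E_sets by (intro finite_measure_subadditive_finite) auto
  finally show ?thesis unfolding E_def .
qed

theorem mainTheorem16:
  fixes r \<epsilon> :: real
  assumes "r > 0" and "\<epsilon> > 0"
  shows "\<exists>C::real. \<forall>(T::nat) j (M::'w measure) X Y x y.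
     T \<ge> 1 \<longrightarrow> j \<in> {1..T} \<longrightarrow> indep_planar_BMs M X Y x y \<longrightarrow>
       measure M {\<omega> \<in> space M. real (card (close_set X Y T \<epsilon> j \<omega>)) \<ge> real T powr (3 * \<epsilon>)}
         \<le> C * real T powr (- r) \<and>
       measure M {\<omega> \<in> space M. real (card (close_pairs X Y T \<epsilon> \<omega>)) \<ge> real T powr (1 + 3 * \<epsilon>)}
         \<le> C * real T powr (- r)"
proof -
  obtain C where "C \<ge> 0" and tail: "\<And>(T :: nat) j (M :: 'w measure) X Y x. planar_BM M X x \<Longrightarrow> T \<ge> 1 \<Longrightarrow>
       measure M {\<omega> \<in> space M. real T powr (3 * \<epsilon>) \<le> real (card (close_set X Y T \<epsilon> j \<omega>))}
         \<le> C * real T powr (- (r + 1))"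
    using close_set_tail_bound[of \<epsilon> "r + 1"] assms by auto
  show ?thesis
  proof (intro exI allI impI conjI)
    fix T j :: nat and M :: "'w measure" and X Y x y
    assume T: "T \<ge> 1" and j: "j \<in> {1..T}" and BMs: "indep_planar_BMs M X Y x y"
    then have BM: "planar_BM M X x" "planar_BM M Y y" by (auto simp: indep_planar_BMs_def)
    interpret prob_space M by (rule planar_BM_prob_space[OF BM(1)])
    have "real T * real T powr (- (r + 1)) = real T powr (1 + - (r + 1))"
      using T by (subst powr_add) simp
    then have step: "real T * real T powr (- (r + 1)) = real T powr (- r)" by simp
    have "C * real T powr (- (r + 1)) \<le> C * real T powr (- r)"
      using T \<open>C \<ge> 0\<close> by (intro mult_left_mono powr_mono) auto
    with tail[OF BM(1) T, of Y j] show "measure M {\<omega> \<in> space M. real (card (close_set X Y T \<epsilon> j \<omega>)) \<ge> real T powr (3 * \<epsilon>)}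
        \<le> C * real T powr (- r)" by linarith
    have "measure M {\<omega> \<in> space M. real (card (close_pairs X Y T \<epsilon> \<omega>)) \<ge> real T powr (1 + 3 * \<epsilon>)}
        \<le> (\<Sum>j\<in>{1..T}. C * real T powr (- (r + 1)))"
      using BM T by (intro order.trans[OF measure_close_pairs_le_sum] sum_mono tail)
        (auto intro: planar_BM_measurable)
    also have "\<dots> = C * real T powr (- r)"
      by (simp flip: step)
    finally show "measure M {\<omega> \<in> space M. real (card (close_pairs X Y T \<epsilon> \<omega>)) \<ge> real T powr (1 + 3 * \<epsilon>)}
        \<le> C * real T powr (- r)" .
  qed
qed

end
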